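(* Let $r\ge1$ and $s\ge1$ be integers, let $u<v$, and let $g$ be a function whose derivative $g^{(r+s-1)}$ exists and is continuous on an open interval containing $[u,v]$. For nonnegative integers $i,j$ and $x\ne y$ define \[ {}_iM_j(x,y)=\frac{\partial^{i+j}}{\partial x^i\,\partial y^j}\left(\frac{g(y)-g(x)}{y-x}\right). \] Then \[ E\left[g^{(r+s-1)}(B_{r,s}(u,v))\right]=\frac{1}{B(r,s)}\ {}_{r-1}M_{s-1}(u,v), \] i.e. \[ \int_u^v g^{(r+s-1)}(t)\,(t-u)^{s-1}(v-t)^{r-1}\,dt=(v-u)^{r+s-1}\ {}_{r-1}M_{s-1}(u,v). \]
   Context: For $r>0$, $s>0$ and $u<v$, $B_{r,s}(u,v)$ denotes a generalized Beta random variable with density \[ f_B(y)=\frac{1}{B(r,s)}\frac{(y-u)^{s-1}(v-y)^{r-1}}{(v-u)^{r+s-1}},\qquad u\le y\le v, \] where $B(\cdot,\cdot)$ is the Beta function. *)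

theory Defs
  imports "HOL-Analysis.Analysis"
begin

definition Mij :: "(real \<Rightarrow> real) \<Rightarrow> nat \<Rightarrow> nat \<Rightarrow> real \<Rightarrow> real \<Rightarrow> real" where
  "Mij g i j x y =
     (deriv ^^ i) (\<lambda>x'. (deriv ^^ j) (\<lambda>y'. (g y' - g x') / (y' - x')) y) x"

definition beta_density :: "nat \<Rightarrow> nat \<Rightarrow> real \<Rightarrow> real \<Rightarrow> real \<Rightarrow> real" where
  "beta_density r s u v y =
     (1 / Beta (real r) (real s)) * ((y - u) ^ (s - 1) * (v - y) ^ (r - 1)) / (v - u) ^ (r + s - 1)"

end

theory Submission
  imports Defs
begin

text \<open>The difference quotient is the mean of g' along the segment:
  (g y - g x) / (y - x) = integral over t in [0,1] of g'((1 - t) x + t y).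
  Differentiating i times in x and j times in y under the integral sign gives
  iMj(x, y) = integral over t in [0,1] of g^(i+j+1)((1 - t) x + t y) (1 - t)^i t^j,
  and the affine substitution t |-> (1 - t) u + t v turns this into the Beta integral.\<close>

definition divdiff_integral :: "(real \<Rightarrow> real) \<Rightarrow> nat \<Rightarrow> nat \<Rightarrow> real \<Rightarrow> real \<Rightarrow> real" where
  "divdiff_integral g i j x y =
     integral {0..1} (\<lambda>t. (deriv ^^ Suc (i + j)) g ((1 - t) * x + t * y) * ((1 - t) ^ i * t ^ j))"

lemma convex_segment_mem:
  fixes I :: "real set"
  assumes "convex I" "x \<in> I" "y \<in> I" "t \<in> {0..1}"
  shows "(1 - t) * x + t * y \<in> I"
  using convexD[OF assms(1-3), of "1 - t" t] assms(4) by simp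

lemma has_real_derivative_integral_unit_interval:
  fixes \<phi> \<phi>' \<alpha> \<beta> w :: "real \<Rightarrow> real" and I :: "real set"
  assumes I: "open I" "convex I"
    and \<phi>: "\<And>z. z \<in> I \<Longrightarrow> (\<phi> has_real_derivative \<phi>' z) (at z)"
    and cont: "continuous_on I \<phi>'" "continuous_on {0..1} \<alpha>" "continuous_on {0..1} \<beta>"
      "continuous_on {0..1} w"
    and mem: "\<And>y t. y \<in> I \<Longrightarrow> t \<in> {0..1} \<Longrightarrow> \<alpha> t + \<beta> t * y \<in> I"
    and y: "y \<in> I"
  shows "((\<lambda>y. integral {0..1} (\<lambda>t. \<phi> (\<alpha> t + \<beta> t * y) * w t)) has_real_derivative
           integral {0..1} (\<lambda>t. \<phi>' (\<alpha> t + \<beta> t * y) * \<beta> t * w t)) (at y)"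
proof -
  have cont_\<phi>: "continuous_on I \<phi>"
    using \<phi> by (intro DERIV_continuous_on) (auto simp: at_within_open[OF _ I(1)])
  have "((\<lambda>y. integral (cbox 0 1) (\<lambda>t. \<phi> (\<alpha> t + \<beta> t * y) * w t)) has_real_derivative
           integral (cbox 0 1) (\<lambda>t. \<phi>' (\<alpha> t + \<beta> t * y) * \<beta> t * w t)) (at y within I)"
  proof (rule leibniz_rule_field_derivative)
    fix x t assume x: "x \<in> I" and t: "t \<in> cbox (0::real) 1"
    have "((\<lambda>x. \<alpha> t + \<beta> t * x) has_real_derivative \<beta> t) (at x)"
      by (auto intro!: derivative_eq_intros)
    from DERIV_chain'[OF this \<phi>[OF mem[OF x]]] t
    show "((\<lambda>x. \<phi> (\<alpha> t + \<beta> t * x) * w t) has_real_derivative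
            \<phi>' (\<alpha> t + \<beta> t * x) * \<beta> t * w t) (at x within I)"
      by (auto intro: has_field_derivative_at_within DERIV_cmult_right)
  next
    fix x assume "x \<in> I"
    then have "continuous_on {0..1} (\<lambda>t. \<phi> (\<alpha> t + \<beta> t * x) * w t)"
      using mem by (intro continuous_intros continuous_on_compose2[OF cont_\<phi>] cont) auto
    then show "(\<lambda>t. \<phi> (\<alpha> t + \<beta> t * x) * w t) integrable_on cbox 0 1"
      by (simp add: integrable_continuous_interval)
  next
    have snd: "continuous_on (I \<times> {0..1}) (\<lambda>p. f (snd p))" if "continuous_on {0..1} f" for f
      using that by (rule continuous_on_compose2[OF _ continuous_on_snd]) auto
    have "continuous_on (I \<times> {0..1}) (\<lambda>p. \<phi>' (\<alpha> (snd p) + \<beta> (snd p) * fst p))"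
      using mem by (intro continuous_on_compose2[OF cont(1)] continuous_intros snd cont) auto
    then have "continuous_on (I \<times> {0..1})
        (\<lambda>p. \<phi>' (\<alpha> (snd p) + \<beta> (snd p) * fst p) * \<beta> (snd p) * w (snd p))"
      by (intro continuous_intros snd cont)
    then show "continuous_on (I \<times> cbox 0 1) (\<lambda>(x, t). \<phi>' (\<alpha> t + \<beta> t * x) * \<beta> t * w t)"
      by (simp add: case_prod_beta)
  qed (use y I in auto)
  then show ?thesis
    by (simp add: at_within_open[OF y I(1)])
qed

lemma diff_quotient_eq_divdiff_integral:
  fixes g :: "real \<Rightarrow> real"
  assumes "convex I" "x \<in> I" "y \<in> I" "x \<noteq> y"
    and g: "\<And>z. z \<in> I \<Longrightarrow> (g has_real_derivative deriv g z) (at z)"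
  shows "(g y - g x) / (y - x) = divdiff_integral g 0 0 x y"
proof -
  have "((\<lambda>t. deriv g ((1 - t) * x + t * y) * (y - x)) has_integral
          g ((1 - 1) * x + 1 * y) - g ((1 - 0) * x + 0 * y)) {0..1}"
  proof (rule fundamental_theorem_of_calculus)
    fix t :: real assume "t \<in> {0..1}"
    then have "(1 - t) * x + t * y \<in> I"
      using convex_segment_mem assms(1-3) by blast
    moreover have "((\<lambda>t. (1 - t) * x + t * y) has_real_derivative y - x) (at t)"
      by (auto intro!: derivative_eq_intros)
    ultimately have "((\<lambda>t. g ((1 - t) * x + t * y)) has_real_derivative
        deriv g ((1 - t) * x + t * y) * (y - x)) (at t)"
      using DERIV_chain' g by blast
    then show "((\<lambda>t. g ((1 - t) * x + t * y)) has_vector_derivative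
        deriv g ((1 - t) * x + t * y) * (y - x)) (at t within {0..1})"
      by (simp add: has_real_derivative_iff_has_vector_derivative[symmetric]
          has_field_derivative_at_within)
  qed simp
  from integral_unique[OF this] have "(y - x) * divdiff_integral g 0 0 x y = g y - g x"
    by (simp add: divdiff_integral_def mult.commute)
  then show ?thesis
    using assms(4) by (simp add: field_simps)
qed

lemma has_real_derivative_divdiff_integral_right:
  fixes g :: "real \<Rightarrow> real"
  assumes I: "open I" "convex I" "x \<in> I" "y \<in> I"
    and diff: "\<And>z. z \<in> I \<Longrightarrow>
      ((deriv ^^ Suc (i + j)) g has_real_derivative (deriv ^^ Suc (Suc (i + j))) g z) (at z)"
    and cont: "continuous_on I ((deriv ^^ Suc (Suc (i + j))) g)"
  shows "((\<lambda>y. divdiff_integral g i j x y) has_real_derivative divdiff_integral g i (Suc j) x y) (at y)"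
proof -
  have "((\<lambda>y. divdiff_integral g i j x y) has_real_derivative
      integral {0..1} (\<lambda>t. (deriv ^^ Suc (Suc (i + j))) g ((1 - t) * x + t * y) * t *
        ((1 - t) ^ i * t ^ j))) (at y)"
    unfolding divdiff_integral_def
    by (rule has_real_derivative_integral_unit_interval[OF I(1,2) diff cont])
      (use I convex_segment_mem in \<open>auto intro!: continuous_intros\<close>)
  then show ?thesis
    by (simp add: divdiff_integral_def mult_ac)
qed

lemma has_real_derivative_divdiff_integral_left:
  fixes g :: "real \<Rightarrow> real"
  assumes I: "open I" "convex I" "x \<in> I" "y \<in> I"
    and diff: "\<And>z. z \<in> I \<Longrightarrow>
      ((deriv ^^ Suc (i + j)) g has_real_derivative (deriv ^^ Suc (Suc (i + j))) g z) (at z)"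
    and cont: "continuous_on I ((deriv ^^ Suc (Suc (i + j))) g)"
  shows "((\<lambda>x. divdiff_integral g i j x y) has_real_derivative divdiff_integral g (Suc i) j x y) (at x)"
proof -
  have mem: "t * y + (1 - t) * x' \<in> I" if "x' \<in> I" "t \<in> {0..1}" for x' t
    using convex_segment_mem[OF I(2) that(1) I(4) that(2)] by (simp add: add.commute)
  have "((\<lambda>x. integral {0..1} (\<lambda>t. (deriv ^^ Suc (i + j)) g (t * y + (1 - t) * x) *
        ((1 - t) ^ i * t ^ j))) has_real_derivative
      integral {0..1} (\<lambda>t. (deriv ^^ Suc (Suc (i + j))) g (t * y + (1 - t) * x) * (1 - t) *
        ((1 - t) ^ i * t ^ j))) (at x)"
    by (rule has_real_derivative_integral_unit_interval[OF I(1,2) diff cont])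
      (use I mem in \<open>auto intro!: continuous_intros\<close>)
  then show ?thesis
    by (simp add: divdiff_integral_def ac_simps)
qed

lemma higher_deriv_eq_on_open:
  fixes f :: "real \<Rightarrow> real" and F :: "nat \<Rightarrow> real \<Rightarrow> real"
  assumes "open S" and base: "\<And>y. y \<in> S \<Longrightarrow> f y = F 0 y"
    and diff: "\<And>k y. k < n \<Longrightarrow> y \<in> S \<Longrightarrow> (F k has_real_derivative F (Suc k) y) (at y)"
  shows "\<forall>y\<in>S. (deriv ^^ n) f y = F n y"
  using diff
proof (induction n)
  case 0
  then show ?case using base by simp
next
  case (Suc n)
  show ?case
  proof
    fix y assume y: "y \<in> S"
    have "eventually (\<lambda>z. (deriv ^^ n) f z = F n z) (nhds y)"
      using eventually_nhds_in_open[OF \<open>open S\<close> y] Suc by (auto elim!: eventually_mono)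
    then have "(deriv ^^ Suc n) f y = deriv (F n) y"
      by (simp add: deriv_cong_ev)
    also have "\<dots> = F (Suc n) y"
      using Suc.prems y by (intro DERIV_imp_deriv) auto
    finally show "(deriv ^^ Suc n) f y = F (Suc n) y" .
  qed
qed

lemma continuous_on_higher_deriv:
  fixes g :: "real \<Rightarrow> real"
  assumes "open I"
    and diff: "\<And>k z. k < N \<Longrightarrow> z \<in> I \<Longrightarrow> ((deriv ^^ k) g has_real_derivative (deriv ^^ Suc k) g z) (at z)"
    and cont: "continuous_on I ((deriv ^^ N) g)"
    and "k \<le> N"
  shows "continuous_on I ((deriv ^^ k) g)"
proof (cases "k < N")
  case True
  then show ?thesis
    using diff by (intro DERIV_continuous_on) (auto simp: at_within_open[OF _ \<open>open I\<close>])
qed (use cont \<open>k \<le> N\<close> in auto)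

lemma Mij_eq_divdiff_integral:
  fixes g :: "real \<Rightarrow> real"
  assumes I: "open I" "convex I" "x \<in> I" "y \<in> I" "x \<noteq> y"
    and diff: "\<And>k z. k < N \<Longrightarrow> z \<in> I \<Longrightarrow> ((deriv ^^ k) g has_real_derivative (deriv ^^ Suc k) g z) (at z)"
    and cont: "continuous_on I ((deriv ^^ N) g)"
    and ij: "Suc (i + j) \<le> N"
  shows "Mij g i j x y = divdiff_integral g i j x y"
proof -
  note cont_k = continuous_on_higher_deriv[OF I(1) diff cont]
  have open_punctured: "open (I - {z})" for z
    using I(1) by (intro open_Diff) auto
  have deriv_y: "\<forall>y'\<in>I - {x'}. (deriv ^^ j) (\<lambda>y'. (g y' - g x') / (y' - x')) y' =
      divdiff_integral g 0 j x' y'" if "x' \<in> I" for x'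
  proof (rule higher_deriv_eq_on_open[OF open_punctured])
    show "(g y' - g x') / (y' - x') = divdiff_integral g 0 0 x' y'" if "y' \<in> I - {x'}" for y'
      using diff[of 0] ij that \<open>x' \<in> I\<close>
      by (intro diff_quotient_eq_divdiff_integral[OF I(2)]) auto
    show "((\<lambda>y'. divdiff_integral g 0 k x' y') has_real_derivative divdiff_integral g 0 (Suc k) x' y')
        (at y')" if "k < j" "y' \<in> I - {x'}" for k y'
      using that ij \<open>x' \<in> I\<close>
      by (intro has_real_derivative_divdiff_integral_right[OF I(1,2)] diff cont_k) auto
  qed
  have "\<forall>x'\<in>I - {y}. (deriv ^^ i) (\<lambda>x'. (deriv ^^ j) (\<lambda>y'. (g y' - g x') / (y' - x')) y) x' =
      divdiff_integral g i j x' y"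
  proof (rule higher_deriv_eq_on_open[OF open_punctured])
    show "((\<lambda>x'. divdiff_integral g k j x' y) has_real_derivative divdiff_integral g (Suc k) j x' y)
        (at x')" if "k < i" "x' \<in> I - {y}" for k x'
      using that ij \<open>y \<in> I\<close>
      by (intro has_real_derivative_divdiff_integral_left[OF I(1,2)] diff cont_k) auto
  qed (use deriv_y I in auto)
  then show ?thesis
    using I by (simp add: Mij_def)
qed

lemma integral_rescale_unit_interval:
  fixes f :: "real \<Rightarrow> real"
  assumes "u \<le> v" "continuous_on {u..v} f"
  shows "integral {u..v} f = (v - u) * integral {0..1} (\<lambda>t. f ((1 - t) * u + t * v))"
proof -
  have "((\<lambda>t. (v - u) *\<^sub>R f ((1 - t) * u + t * v)) has_integral
      integral {(1 - 0) * u + 0 * v..(1 - 1) * u + 1 * v} f) {0..1}"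
  proof (rule has_integral_substitution[OF _ _ _ assms(2)])
    show "(\<lambda>t. (1 - t) * u + t * v) ` {0..1} \<subseteq> {u..v}"
      using convex_segment_mem[of "{u..v}" u v] assms(1) by auto
    show "((\<lambda>t. (1 - t) * u + t * v) has_real_derivative v - u) (at t within {0..1})" for t
      by (auto intro!: derivative_eq_intros)
  qed (use assms(1) in auto)
  from integral_unique[OF this] show ?thesis
    by simp
qed

lemma beta_integral_eq_Mij:
  fixes g :: "real \<Rightarrow> real"
  assumes I: "open I" "convex I" "u \<in> I" "v \<in> I" "u < v"
    and diff: "\<And>k z. k < Suc (p + q) \<Longrightarrow> z \<in> I \<Longrightarrow>
      ((deriv ^^ k) g has_real_derivative (deriv ^^ Suc k) g z) (at z)"
    and cont: "continuous_on I ((deriv ^^ Suc (p + q)) g)"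
  shows "integral {u..v} (\<lambda>t. (deriv ^^ Suc (p + q)) g t * (t - u) ^ q * (v - t) ^ p)
    = (v - u) ^ Suc (p + q) * Mij g p q u v"
proof -
  have uv: "{u..v} \<subseteq> I"
    using closed_segment_subset[OF I(3,4,2)] I(5) by (simp add: closed_segment_eq_real_ivl)
  have rescaled_integrand: "(deriv ^^ Suc (p + q)) g ((1 - t) * u + t * v) *
      ((1 - t) * u + t * v - u) ^ q * (v - ((1 - t) * u + t * v)) ^ p =
      (v - u) ^ (p + q) * ((deriv ^^ Suc (p + q)) g ((1 - t) * u + t * v) * ((1 - t) ^ p * t ^ q))"
    for t
  proof -
    have "(1 - t) * u + t * v - u = t * (v - u)" "v - ((1 - t) * u + t * v) = (1 - t) * (v - u)"
      by algebra+
    then show ?thesis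
      by (simp only: power_mult_distrib power_add mult_ac)
  qed
  have cont_integrand:
      "continuous_on {u..v} (\<lambda>t. (deriv ^^ Suc (p + q)) g t * (t - u) ^ q * (v - t) ^ p)"
    using uv by (intro continuous_intros continuous_on_subset[OF cont])
  have "integral {u..v} (\<lambda>t. (deriv ^^ Suc (p + q)) g t * (t - u) ^ q * (v - t) ^ p)
      = (v - u) * integral {0..1} (\<lambda>t. (v - u) ^ (p + q) *
          ((deriv ^^ Suc (p + q)) g ((1 - t) * u + t * v) * ((1 - t) ^ p * t ^ q)))"
    unfolding integral_rescale_unit_interval[OF less_imp_le[OF I(5)] cont_integrand] rescaled_integrand ..
  also have "\<dots> = (v - u) ^ Suc (p + q) * divdiff_integral g p q u v"
    by (simp add: divdiff_integral_def)
  finally show ?thesis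
    using Mij_eq_divdiff_integral[OF I(1-4) _ diff cont] I(5) by simp
qed

theorem mainTheorem5:
  fixes g :: "real \<Rightarrow> real" and r s :: nat and u v a b :: real
  assumes "r \<ge> 1" and "s \<ge> 1" and "u < v"
    and "a < u" and "v < b"
    and "\<And>k x. k < r + s - 1 \<Longrightarrow> x \<in> {a<..<b} \<Longrightarrow>
           ((deriv ^^ k) g has_real_derivative (deriv ^^ Suc k) g x) (at x)"
    and "continuous_on {a<..<b} ((deriv ^^ (r + s - 1)) g)"
  shows "integral {u..v} (\<lambda>y. (deriv ^^ (r + s - 1)) g y * beta_density r s u v y)
           = (1 / Beta (real r) (real s)) * Mij g (r - 1) (s - 1) u v
       \<and> integral {u..v} (\<lambda>t. (deriv ^^ (r + s - 1)) g t * (t - u) ^ (s - 1) * (v - t) ^ (r - 1))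
           = (v - u) ^ (r + s - 1) * Mij g (r - 1) (s - 1) u v"
proof -
  obtain p q where r: "r = Suc p" and s: "s = Suc q"
    using assms(1,2) by (metis Suc_le_D One_nat_def)
  have beta: "integral {u..v} (\<lambda>t. (deriv ^^ Suc (p + q)) g t * (t - u) ^ q * (v - t) ^ p)
      = (v - u) ^ Suc (p + q) * Mij g p q u v"
    using assms by (intro beta_integral_eq_Mij[of "{a<..<b}"]) (auto simp: r s)
  moreover have "(\<lambda>y. (deriv ^^ Suc (p + q)) g y * beta_density r s u v y) =
      (\<lambda>y. (1 / Beta (real r) (real s) / (v - u) ^ Suc (p + q)) *
        ((deriv ^^ Suc (p + q)) g y * (y - u) ^ q * (v - y) ^ p))"
    by (auto simp: beta_density_def r s)
  ultimately show ?thesis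
    using assms(3) by (simp add: r s)
qed

end
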